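(* Let $F=C^\infty(]0,1[,\mathbb{R})$ with the Fr\'echet topology given by the seminorms $\|f\|_{n,k}=\sup_{\frac{1}{n+1}\le x\le\frac{n}{n+1}}|f^{(k)}(x)|$, $(n,k)\in\mathbb{N}^*\times\mathbb{N}$. Let $\mathcal{A}=\{f\in C^\infty(]0,1[,]0,1[)\mid \lim_{x\to1}f(x)=1,\ \lim_{x\to0}f(x)=0\}$ and $\mathcal{D}=\{f\in\mathcal{A}\mid \inf_{x\in]0,1[}f'(x)>0 \text{ and } \sup_{x\in]0,1[}f'(x)>0\}\subset F$. Let $P\in\mathbb{R}[x]$ with $P(0)=P(1)=0$, $0<P(x)<\min(x,1-x)$ on $]0,1[$ and $\sup_{]0,1[}|P'|<1$, let $\varphi(t,x)=\frac{P(x)t}{(1-P(x))t+P(x)}$ and $c_t(x)=x+\varphi(t,x)$ for $t\ge0$, $c_t(x)=x-\varphi(-t,x)$ for $t<0$. Then the path $t\mapsto c_t$ is of class $C^1$ from $]-1,1[$ to $\mathcal{D}$, and $\partial_t c_t|_{t=0}=\mathbf{1}$ is the constant function equal to $1$. *)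

theory Defs
  imports "HOL-Analysis.Analysis" "HOL-Computational_Algebra.Polynomial"
begin

definition smooth_on :: "real set \<Rightarrow> (real \<Rightarrow> real) \<Rightarrow> bool" where
  "smooth_on S f \<longleftrightarrow> (\<forall>k. \<forall>x\<in>S. ((deriv ^^ k) f) field_differentiable (at x))"

definition seminorm_nk :: "nat \<Rightarrow> nat \<Rightarrow> (real \<Rightarrow> real) \<Rightarrow> real" where
  "seminorm_nk n k f = Sup ((\<lambda>x. \<bar>(deriv ^^ k) f x\<bar>) ` {1 / (real n + 1) .. real n / (real n + 1)})"

definition F_tendsto :: "('a \<Rightarrow> real \<Rightarrow> real) \<Rightarrow> (real \<Rightarrow> real) \<Rightarrow> 'a filter \<Rightarrow> bool" where
  "F_tendsto g l F \<longleftrightarrow>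
     (\<forall>n k. n \<ge> 1 \<longrightarrow> ((\<lambda>s. seminorm_nk n k (\<lambda>x. g s x - l x)) \<longlongrightarrow> 0) F)"

definition F_has_derivative :: "(real \<Rightarrow> real \<Rightarrow> real) \<Rightarrow> (real \<Rightarrow> real) \<Rightarrow> real \<Rightarrow> bool" where
  "F_has_derivative c D t \<longleftrightarrow>
     smooth_on {0<..<1} D \<and> F_tendsto (\<lambda>h x. (c (t + h) x - c t x) / h) D (at 0)"

definition F_C1_on :: "real set \<Rightarrow> (real \<Rightarrow> real \<Rightarrow> real) \<Rightarrow> bool" where
  "F_C1_on T c \<longleftrightarrow>
     (\<forall>t\<in>T. smooth_on {0<..<1} (c t)) \<and>
     (\<exists>c'. (\<forall>t\<in>T. F_has_derivative c (c' t) t) \<and> (\<forall>t\<in>T. F_tendsto c' (c' t) (at t within T)))"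

definition setA :: "(real \<Rightarrow> real) set" where
  "setA = {f. smooth_on {0<..<1} f \<and> (\<forall>x\<in>{0<..<1}. f x \<in> {0<..<1}) \<and>
              (f \<longlongrightarrow> 1) (at_left 1) \<and> (f \<longlongrightarrow> 0) (at_right 0)}"

definition setD :: "(real \<Rightarrow> real) set" where
  "setD = {f \<in> setA. Inf ((\<lambda>x. ereal (deriv f x)) ` {0<..<1}) > 0 \<and>
                     Sup ((\<lambda>x. ereal (deriv f x)) ` {0<..<1}) > 0}"

definition phiP :: "real poly \<Rightarrow> real \<Rightarrow> real \<Rightarrow> real" where
  "phiP P t x = poly P x * t / ((1 - poly P x) * t + poly P x)"

definition cP :: "real poly \<Rightarrow> real \<Rightarrow> real \<Rightarrow> real" where
  "cP P t x = (if t \<ge> 0 then x + phiP P t x else x - phiP P (- t) x)"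

end

theory Submission
  imports Defs
begin

text \<open>
  Write \<open>D s x = P x + (1 - P x) s\<close>, so that \<open>c t x = x + t P x / D |t| x\<close>. Whenever \<open>t\<close>
  and \<open>t + h\<close> have the same sign, the difference quotient \<open>(c (t + h) x - c t x) / h\<close> equals
  \<open>(P x)\<^sup>2 / (D |t| x \<cdot> D |t + h| x)\<close> exactly; at \<open>h = 0\<close> this is the derivative
  \<open>(P x / D |t| x)\<^sup>2\<close>, which is \<open>1\<close> for \<open>t = 0\<close>. Hence every
  convergence required in \<open>F\<close> has the form \<open>H p \<rightarrow> H p\<^sub>0 = 0\<close> for a family \<open>H p x\<close> that is
  jointly continuous in \<open>(p, x)\<close> together with all its \<open>x\<close>-derivatives. Such families are
  closed under sums, products and quotients by nonvanishing families, and uniform continuity on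
  compact rectangles turns the vanishing of all \<open>x\<close>-derivatives of \<open>H p\<^sub>0\<close> into convergence
  in every seminorm. Membership in \<open>setD\<close> comes from
  \<open>\<partial>\<^sub>x c t x = 1 + t |t| P' x / (D |t| x)\<^sup>2 \<ge> 1 - sup |P'| > 0\<close>, as \<open>|t| \<le> D |t| x\<close>.
\<close>

section \<open>Parametrised families smooth in the space variable\<close>

text \<open>
  \<open>g p x\<close> is a function of \<open>x \<in> S\<close> depending on a real parameter \<open>p\<close>; coinduction lets
  \<open>smooth_family S g\<close> say that \<open>g\<close> and all its iterated \<open>x\<close>-derivatives are jointly
  continuous in \<open>(p, x)\<close>.
\<close>

coinductive smooth_family :: "real set \<Rightarrow> (real \<Rightarrow> real \<Rightarrow> real) \<Rightarrow> bool" for S where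
  "continuous_on (UNIV \<times> S) (\<lambda>z. g (fst z) (snd z)) \<Longrightarrow>
   (\<And>p x. x \<in> S \<Longrightarrow> (g p has_real_derivative g' p x) (at x)) \<Longrightarrow>
   smooth_family S g' \<Longrightarrow> smooth_family S g"

text \<open>
  The \<open>x\<close>-derivative is determined only on \<open>S\<close>; the choice picks a version that is again
  a smooth family.
\<close>

definition family_deriv :: "real set \<Rightarrow> (real \<Rightarrow> real \<Rightarrow> real) \<Rightarrow> real \<Rightarrow> real \<Rightarrow> real" where
  "family_deriv S g =
     (SOME g'. smooth_family S g' \<and> (\<forall>p. \<forall>x\<in>S. (g p has_real_derivative g' p x) (at x)))"

lemma smooth_family_continuous_on:
  "smooth_family S g \<Longrightarrow> continuous_on (UNIV \<times> S) (\<lambda>z. g (fst z) (snd z))"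
  by (erule smooth_family.cases) simp

lemma
  assumes "smooth_family S g"
  shows smooth_family_family_deriv: "smooth_family S (family_deriv S g)"
    and has_real_derivative_family_deriv:
      "x \<in> S \<Longrightarrow> (g p has_real_derivative family_deriv S g p x) (at x)"
proof -
  from assms
  have "\<exists>g'. smooth_family S g' \<and> (\<forall>p. \<forall>x\<in>S. (g p has_real_derivative g' p x) (at x))"
    by (cases rule: smooth_family.cases) blast
  from someI_ex[OF this] show "smooth_family S (family_deriv S g)"
    and "x \<in> S \<Longrightarrow> (g p has_real_derivative family_deriv S g p x) (at x)"
    unfolding family_deriv_def by blast+
qed

lemma smooth_family_coinduct [consumes 1, case_names smooth_family]:
  assumes "X g"
    and "\<And>g. X g \<Longrightarrow> continuous_on (UNIV \<times> S) (\<lambda>z. g (fst z) (snd z)) \<and>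
      (\<exists>g'. (\<forall>p. \<forall>x\<in>S. (g p has_real_derivative g' p x) (at x)) \<and> (X g' \<or> smooth_family S g'))"
  shows "smooth_family S g"
  using assms by (coinduction arbitrary: g rule: smooth_family.coinduct) blast

lemma smooth_family_add:
  assumes "smooth_family S f" "smooth_family S g"
  shows "smooth_family S (\<lambda>p x. f p x + g p x)"
  using assms
proof (coinduction arbitrary: f g rule: smooth_family_coinduct)
  case (smooth_family f g)
  let ?d = "family_deriv S"
  have "continuous_on (UNIV \<times> S) (\<lambda>z. f (fst z) (snd z) + g (fst z) (snd z))"
    using smooth_family by (intro continuous_intros smooth_family_continuous_on)
  moreover have "((\<lambda>x. f p x + g p x) has_real_derivative ?d f p x + ?d g p x) (at x)"
    if "x \<in> S" for p x
    using smooth_family that by (intro derivative_intros has_real_derivative_family_deriv)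
  ultimately show ?case
    using smooth_family
    by (intro conjI exI[of _ "\<lambda>p x. ?d f p x + ?d g p x"]) (auto intro: smooth_family_family_deriv)
qed

lemma smooth_family_param:
  assumes "continuous_on UNIV a"
  shows "smooth_family S (\<lambda>p x. a p)"
  using assms
proof (coinduction arbitrary: a rule: smooth_family_coinduct)
  case (smooth_family a)
  have "continuous_on (UNIV \<times> S) (\<lambda>z. a (fst z))"
    by (intro continuous_on_compose2[OF smooth_family]) (auto intro!: continuous_intros)
  then show ?case
    by (intro conjI exI[of _ "\<lambda>p x. 0"]) auto
qed

lemma smooth_family_poly: "smooth_family S (\<lambda>p x. poly Q x)"
proof (coinduction arbitrary: Q rule: smooth_family_coinduct)
  case (smooth_family Q)
  have "continuous_on (UNIV \<times> S) (\<lambda>z. poly Q (snd z))"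
    by (intro continuous_intros)
  then show ?case
    by (intro conjI exI[of _ "\<lambda>p x. poly (pderiv Q) x"]) (auto intro: poly_DERIV)
qed

text \<open>
  The derivative of a product is a sum of two products, so products are handled through
  the class of finite sums of products, which is closed under \<open>x\<close>-derivatives.
\<close>

lemma has_real_derivative_sum_products:
  assumes "\<forall>(f, g)\<in>set L. smooth_family S f \<and> smooth_family S g" and "x \<in> S"
  shows "((\<lambda>x. \<Sum>(f, g)\<leftarrow>L. f p x * g p x) has_real_derivative
           (\<Sum>(f, g)\<leftarrow>L. family_deriv S f p x * g p x + f p x * family_deriv S g p x)) (at x)"
  using assms(1)
  by (induction L) (auto intro!: derivative_eq_intros has_real_derivative_family_deriv assms(2))

lemma smooth_family_sum_products:
  assumes "\<forall>(f, g)\<in>set L. smooth_family S f \<and> smooth_family S g"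
  shows "smooth_family S (\<lambda>p x. \<Sum>(f, g)\<leftarrow>L. f p x * g p x)"
  using assms
proof (coinduction arbitrary: L rule: smooth_family_coinduct)
  case (smooth_family L)
  let ?d = "family_deriv S"
  define L' where "L' = map (\<lambda>(f, g). (?d f, g)) L @ map (\<lambda>(f, g). (f, ?d g)) L"
  have "continuous_on (UNIV \<times> S) (\<lambda>z. \<Sum>(f, g)\<leftarrow>L. f (fst z) (snd z) * g (fst z) (snd z))"
    using smooth_family
    by (induction L) (auto intro!: continuous_intros simp: smooth_family_continuous_on)
  moreover have "(\<Sum>(f, g)\<leftarrow>L'. f p x * g p x) =
      (\<Sum>(f, g)\<leftarrow>L. ?d f p x * g p x + f p x * ?d g p x)" for p x
    unfolding L'_def by (induction L) auto
  moreover have "\<forall>(f, g)\<in>set L'. smooth_family S f \<and> smooth_family S g"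
    using smooth_family by (auto simp: L'_def smooth_family_family_deriv)
  ultimately show ?case
    using has_real_derivative_sum_products[OF smooth_family]
    by (intro conjI exI[of _ "\<lambda>p x. \<Sum>(f, g)\<leftarrow>L'. f p x * g p x"] disjI1 exI[of _ L']) auto
qed

lemma smooth_family_mult:
  assumes "smooth_family S f" "smooth_family S g"
  shows "smooth_family S (\<lambda>p x. f p x * g p x)"
  using smooth_family_sum_products[of "[(f, g)]"] assms by simp

lemma smooth_family_diff:
  assumes "smooth_family S f" "smooth_family S g"
  shows "smooth_family S (\<lambda>p x. f p x - g p x)"
  using smooth_family_add[OF assms(1)
      smooth_family_mult[OF smooth_family_param[OF continuous_on_const[of UNIV "-1"]] assms(2)]]
  by simp

text \<open>
  \<open>\<partial>\<^sub>x (f / g\<^sup>m) = (f' g - m f g') / g\<^sup>m\<^sup>+\<^sup>1\<close>: the quotients of smooth families by powers of a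
  fixed nonvanishing \<open>g\<close> form a class closed under \<open>x\<close>-derivatives.
\<close>

lemma smooth_family_divide_power:
  assumes "smooth_family S f" "smooth_family S g" and nonzero: "\<And>p x. x \<in> S \<Longrightarrow> g p x \<noteq> 0"
  shows "smooth_family S (\<lambda>p x. f p x / g p x ^ m)"
  using assms(1)
proof (coinduction arbitrary: f m rule: smooth_family_coinduct)
  case (smooth_family f m)
  let ?d = "family_deriv S"
  define N where "N = (\<lambda>p x. ?d f p x * g p x - real m * (f p x * ?d g p x))"
  have "continuous_on (UNIV \<times> S) (\<lambda>z. f (fst z) (snd z) / g (fst z) (snd z) ^ m)"
    using smooth_family assms(2) nonzero
    by (auto intro!: continuous_intros simp: smooth_family_continuous_on)
  moreover have "smooth_family S N"
    unfolding N_def using smooth_family assms(2)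
    by (intro smooth_family_diff smooth_family_mult smooth_family_param smooth_family_family_deriv)
      auto
  moreover have "((\<lambda>x. f p x / g p x ^ m) has_real_derivative N p x / g p x ^ (m + 1)) (at x)"
    if "x \<in> S" for p x
    using nonzero[OF that] smooth_family assms(2) that
    by (auto intro!: derivative_eq_intros has_real_derivative_family_deriv)
      (cases m, auto simp: N_def field_simps power_add)
  ultimately show ?case
    by (intro conjI exI[of _ "\<lambda>p x. N p x / g p x ^ (m + 1)"]) blast+
qed

lemma smooth_family_divide:
  assumes "smooth_family S f" "smooth_family S g" "\<And>p x. x \<in> S \<Longrightarrow> g p x \<noteq> 0"
  shows "smooth_family S (\<lambda>p x. f p x / g p x)"
  using smooth_family_divide_power[OF assms, of 1] by simp

lemma deriv_funpow_cong:
  assumes "open S" "\<And>x. x \<in> S \<Longrightarrow> f x = g x" "x \<in> S"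
  shows "(deriv ^^ k) f x = (deriv ^^ k) g x"
  using assms(3)
proof (induction k arbitrary: x)
  case 0
  then show ?case using assms(2) by simp
next
  case (Suc k)
  have "eventually (\<lambda>y. y \<in> S) (nhds x)"
    using assms(1) Suc.prems by (rule eventually_nhds_in_open)
  then have "eventually (\<lambda>y. (deriv ^^ k) f y = (deriv ^^ k) g y) (nhds x)"
    by (rule eventually_mono) (rule Suc.IH)
  then show ?case by (simp add: deriv_cong_ev)
qed

lemma deriv_funpow_zero: "(deriv ^^ k) (\<lambda>_. 0) = (\<lambda>_::real. 0::real)"
  by (induction k) simp_all

lemma smooth_family_funpow_family_deriv:
  "smooth_family S g \<Longrightarrow> smooth_family S ((family_deriv S ^^ k) g)"
  by (induction k) (auto intro: smooth_family_family_deriv)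

lemma deriv_funpow_eq_family_deriv:
  assumes "smooth_family S g" "open S" "x \<in> S"
  shows "(deriv ^^ k) (g p) x = (family_deriv S ^^ k) g p x"
  using assms(3)
proof (induction k arbitrary: x)
  case 0
  then show ?case by simp
next
  case (Suc k)
  have "deriv ((deriv ^^ k) (g p)) x = deriv ((family_deriv S ^^ k) g p) x"
    using assms(2) Suc by (intro deriv_cong_ev eventually_nhds_in_open[THEN eventually_mono]) auto
  also have "\<dots> = family_deriv S ((family_deriv S ^^ k) g) p x"
    using smooth_family_funpow_family_deriv[OF assms(1)] Suc.prems
    by (intro DERIV_imp_deriv has_real_derivative_family_deriv)
  finally show ?case by simp
qed

lemma smooth_on_smooth_family:
  assumes "smooth_family S g" "open S" "\<And>x. x \<in> S \<Longrightarrow> f x = g p x"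
  shows "smooth_on S f"
  unfolding smooth_on_def
proof (intro allI ballI)
  fix k x assume x: "x \<in> S"
  let ?gk = "(family_deriv S ^^ k) g"
  have "(?gk p has_real_derivative family_deriv S ?gk p x) (at x)"
    using smooth_family_funpow_family_deriv[OF assms(1)] x
    by (rule has_real_derivative_family_deriv)
  moreover have "?gk p y = (deriv ^^ k) f y" if "y \<in> S" for y
    using deriv_funpow_cong[OF assms(2) assms(3) that]
      deriv_funpow_eq_family_deriv[OF assms(1,2) that] by simp
  ultimately have "((deriv ^^ k) f has_real_derivative family_deriv S ?gk p x) (at x)"
    using has_field_derivative_transform_within_open assms(2) x by blast
  then show "(deriv ^^ k) f field_differentiable at x"
    unfolding field_differentiable_def by blast
qed

section \<open>Convergence in the seminorms\<close>

lemma tendsto_Sup_abs_compact: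
  fixes G :: "'a::topological_space \<Rightarrow> real \<Rightarrow> real"
  assumes "continuous_on (UNIV \<times> K) (\<lambda>z. G (fst z) (snd z))" "compact K" "K \<noteq> {}"
    and "\<And>x. x \<in> K \<Longrightarrow> G p0 x = 0"
  shows "((\<lambda>p. Sup ((\<lambda>x. \<bar>G p x\<bar>) ` K)) \<longlongrightarrow> 0) (nhds p0)"
proof (rule tendstoI)
  fix e :: real assume "e > 0"
  then have "0 < e / 2" by simp
  then obtain U where "p0 \<in> U" "open U"
    and "\<forall>p\<in>U. \<forall>x\<in>K. dist (G p x) (G p0 x) \<le> e / 2"
    by (rule continuous_on_prod_compactE[OF assms(1,2) UNIV_I]) simp
  then have U: "\<forall>p\<in>U. \<forall>x\<in>K. \<bar>G p x\<bar> \<le> e / 2"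
    using assms(4) by (simp add: dist_real_def)
  have "dist (Sup ((\<lambda>x. \<bar>G p x\<bar>) ` K)) 0 < e" if "p \<in> U" for p
  proof -
    from assms(3) obtain x0 where "x0 \<in> K" by blast
    have bdd: "bdd_above ((\<lambda>x. \<bar>G p x\<bar>) ` K)"
      using U that by (intro bdd_aboveI[of _ "e / 2"]) auto
    have "0 \<le> \<bar>G p x0\<bar>" by simp
    also have "\<dots> \<le> Sup ((\<lambda>x. \<bar>G p x\<bar>) ` K)"
      using \<open>x0 \<in> K\<close> bdd by (rule cSUP_upper)
    finally have "0 \<le> Sup ((\<lambda>x. \<bar>G p x\<bar>) ` K)" .
    moreover have "Sup ((\<lambda>x. \<bar>G p x\<bar>) ` K) \<le> e / 2"
      using U that assms(3) by (intro cSUP_least) auto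
    ultimately show ?thesis using \<open>e > 0\<close> by (simp add: dist_real_def)
  qed
  then show "eventually (\<lambda>p. dist (Sup ((\<lambda>x. \<bar>G p x\<bar>) ` K)) 0 < e) (nhds p0)"
    using \<open>p0 \<in> U\<close> \<open>open U\<close> eventually_nhds by blast
qed

lemma seminorm_interval_subset: "{1 / (real n + 1) .. real n / (real n + 1)} \<subseteq> {0<..<1}"
proof
  fix x assume "x \<in> {1 / (real n + 1) .. real n / (real n + 1)}"
  moreover have "0 < 1 / (real n + 1)" "real n / (real n + 1) < 1" by simp_all
  ultimately show "x \<in> {0<..<1}"
    by (simp only: atLeastAtMost_iff greaterThanLessThan_iff) linarith
qed

lemma seminorm_interval_nonempty:
  "n \<ge> 1 \<Longrightarrow> {1 / (real n + 1) .. real n / (real n + 1)} \<noteq> {}"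
  by (auto simp: divide_right_mono)

lemma F_tendsto_smooth_familyI:
  assumes H: "smooth_family {0<..<1} H" and H0: "\<And>x. x \<in> {0<..<1} \<Longrightarrow> H p0 x = 0"
    and eq: "eventually (\<lambda>s. \<forall>x\<in>{0<..<1}. q s x - l x = H s x) (at p0 within T)"
  shows "F_tendsto q l (at p0 within T)"
  unfolding F_tendsto_def
proof (intro allI impI)
  fix n k :: nat assume n: "n \<ge> 1"
  define K where "K = {1 / (real n + 1) .. real n / (real n + 1)}"
  let ?Hk = "(family_deriv {0<..<1} ^^ k) H"
  have Hk: "smooth_family {0<..<1} ?Hk"
    using H by (rule smooth_family_funpow_family_deriv)
  have deriv_Hk: "(deriv ^^ k) (H s) x = ?Hk s x" if "x \<in> {0<..<1}" for s x
    using H _ that by (rule deriv_funpow_eq_family_deriv) simp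
  have Hk0: "?Hk p0 x = 0" if "x \<in> {0<..<1}" for x
  proof -
    have "?Hk p0 x = (deriv ^^ k) (H p0) x" using deriv_Hk[OF that] by simp
    also have "\<dots> = (deriv ^^ k) (\<lambda>_. 0) x" by (rule deriv_funpow_cong[OF _ H0 that]) simp
    also have "\<dots> = 0" by (simp add: deriv_funpow_zero)
    finally show ?thesis .
  qed
  have K: "compact K" "K \<noteq> {}" "K \<subseteq> {0<..<1}"
    using seminorm_interval_nonempty[OF n] seminorm_interval_subset by (auto simp: K_def)
  have "continuous_on (UNIV \<times> K) (\<lambda>z. ?Hk (fst z) (snd z))"
    using smooth_family_continuous_on[OF Hk] by (rule continuous_on_subset) (use K in auto)
  then have "((\<lambda>s. Sup ((\<lambda>x. \<bar>?Hk s x\<bar>) ` K)) \<longlongrightarrow> 0) (nhds p0)"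
    using K Hk0 by (intro tendsto_Sup_abs_compact) auto
  then have "((\<lambda>s. Sup ((\<lambda>x. \<bar>?Hk s x\<bar>) ` K)) \<longlongrightarrow> 0) (at p0 within T)"
    by (rule tendsto_mono[rotated]) (simp add: at_within_def)
  moreover have "eventually
      (\<lambda>s. Sup ((\<lambda>x. \<bar>?Hk s x\<bar>) ` K) = seminorm_nk n k (\<lambda>x. q s x - l x)) (at p0 within T)"
    using eq
  proof eventually_elim
    case (elim s)
    have "(deriv ^^ k) (\<lambda>x. q s x - l x) x = ?Hk s x" if "x \<in> K" for x
      using K elim that deriv_funpow_cong[of "{0<..<1}" "\<lambda>x. q s x - l x" "H s"] deriv_Hk
      by auto
    then show ?case
      unfolding seminorm_nk_def K_def[symmetric] by (intro arg_cong[where f = Sup] image_cong) auto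
  qed
  ultimately show "((\<lambda>s. seminorm_nk n k (\<lambda>x. q s x - l x)) \<longlongrightarrow> 0) (at p0 within T)"
    by (rule Lim_transform_eventually)
qed

section \<open>The path \<open>c\<^sub>t\<close>\<close>

definition phi_denom :: "real poly \<Rightarrow> real \<Rightarrow> real \<Rightarrow> real" where
  "phi_denom P s x = poly P x + (1 - poly P x) * s"

definition phi_slope :: "real poly \<Rightarrow> real \<Rightarrow> real \<Rightarrow> real \<Rightarrow> real" where
  "phi_slope P a b x = poly P x ^ 2 / (phi_denom P a x * phi_denom P b x)"

text \<open>
  \<open>phiP P s x = s P(x) / phi_denom P s x\<close>, and \<open>phi_slope P a b x\<close> is the slope of
  \<open>s \<mapsto> phiP P s x\<close> between \<open>a\<close> and \<open>b\<close>; the derivative of the path at \<open>t\<close> is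
  \<open>phi_slope P |t| |t|\<close>.
\<close>

lemma cP_eq: "cP P t x = x + t * poly P x / phi_denom P \<bar>t\<bar> x"
  by (simp add: cP_def phiP_def phi_denom_def algebra_simps)

lemma cP_diff_quotient:
  assumes "phi_denom P \<bar>t\<bar> x \<noteq> 0" "phi_denom P \<bar>t + h\<bar> x \<noteq> 0" "h \<noteq> 0"
    and same_sign: "0 \<le> t * (t + h)"
  shows "(cP P (t + h) x - cP P t x) / h = phi_slope P \<bar>t\<bar> \<bar>t + h\<bar> x"
proof -
  define Da Db where "Da = phi_denom P \<bar>t\<bar> x" and "Db = phi_denom P \<bar>t + h\<bar> x"
  have "(t + h) * Da - t * Db =
      h * poly P x + (1 - poly P x) * ((t + h) * \<bar>t\<bar> - t * \<bar>t + h\<bar>)"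
    by (simp add: Da_def Db_def phi_denom_def algebra_simps)
  also have "(t + h) * \<bar>t\<bar> = t * \<bar>t + h\<bar>"
    using same_sign by (auto simp: zero_le_mult_iff) (simp add: algebra_simps)
  finally have "(t + h) * Da - t * Db = h * poly P x"
    by simp
  moreover have "cP P (t + h) x - cP P t x = poly P x * ((t + h) * Da - t * Db) / (Da * Db)"
    using assms by (simp add: cP_eq Da_def Db_def field_simps)
  ultimately have "cP P (t + h) x - cP P t x = h * (poly P x ^ 2 / (Da * Db))"
    by (simp add: power2_eq_square)
  then show ?thesis
    using assms by (simp add: phi_slope_def Da_def Db_def)
qed

lemma smooth_family_phi_denom:
  "continuous_on UNIV a \<Longrightarrow> smooth_family S (\<lambda>p x. phi_denom P (a p) x)"
  unfolding phi_denom_def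
  by (intro smooth_family_add smooth_family_mult smooth_family_diff smooth_family_poly
      smooth_family_param continuous_on_const)

locale under_tent =
  fixes P :: "real poly"
  assumes under_tent: "\<forall>x\<in>{0<..<1}. 0 < poly P x \<and> poly P x < min x (1 - x)"
begin

lemma P_pos: "x \<in> {0<..<1} \<Longrightarrow> 0 < poly P x"
  using under_tent by blast

lemma P_less: "x \<in> {0<..<1} \<Longrightarrow> poly P x < x" "x \<in> {0<..<1} \<Longrightarrow> poly P x < 1 - x"
  using under_tent by auto

lemma phi_denom_pos: "x \<in> {0<..<1} \<Longrightarrow> 0 \<le> s \<Longrightarrow> 0 < phi_denom P s x"
  using P_pos[of x] P_less[of x] by (simp add: phi_denom_def add_pos_nonneg)

lemma phi_denom_abs_neq_0: "x \<in> {0<..<1} \<Longrightarrow> phi_denom P \<bar>s\<bar> x \<noteq> 0"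
  using phi_denom_pos[of x "\<bar>s\<bar>"] by simp

lemma phi_denom_ge: "x \<in> {0<..<1} \<Longrightarrow> s \<le> 1 \<Longrightarrow> s \<le> phi_denom P s x"
  using P_pos[of x] by (simp add: phi_denom_def algebra_simps mult_left_le_one_le)

lemma phi_slope_0_0: "x \<in> {0<..<1} \<Longrightarrow> phi_slope P 0 0 x = 1"
  using P_pos[of x] by (simp add: phi_slope_def phi_denom_def power2_eq_square)

lemma smooth_family_phi_slope:
  assumes "continuous_on UNIV a" "\<And>p. 0 \<le> a p" "continuous_on UNIV b" "\<And>p. 0 \<le> b p"
  shows "smooth_family {0<..<1} (\<lambda>p x. phi_slope P (a p) (b p) x)"
  unfolding phi_slope_def power2_eq_square
proof (intro smooth_family_divide smooth_family_mult smooth_family_poly smooth_family_phi_denom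
    assms)
  fix p x :: real assume "x \<in> {0<..<1}"
  then show "phi_denom P (a p) x * phi_denom P (b p) x \<noteq> 0"
    using phi_denom_pos assms(2,4) by (metis mult_pos_pos less_irrefl)
qed

lemma smooth_on_cP: "smooth_on {0<..<1} (cP P t)"
proof (rule smooth_on_smooth_family)
  show "smooth_family {0<..<1} (\<lambda>p x. poly [:0, 1:] x + t * poly P x / phi_denom P \<bar>t\<bar> x)"
    by (intro smooth_family_add smooth_family_divide smooth_family_mult smooth_family_poly
        smooth_family_param smooth_family_phi_denom continuous_on_const phi_denom_abs_neq_0)
qed (simp_all add: cP_eq)

lemma deriv_cP:
  assumes x: "x \<in> {0<..<1}"
  shows "deriv (cP P t) x = 1 + t * \<bar>t\<bar> * poly (pderiv P) x / phi_denom P \<bar>t\<bar> x ^ 2"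
proof -
  have "((\<lambda>x. x + t * poly P x / phi_denom P \<bar>t\<bar> x) has_real_derivative
      1 + t * \<bar>t\<bar> * poly (pderiv P) x / phi_denom P \<bar>t\<bar> x ^ 2) (at x)"
    using phi_denom_pos[OF x, of "\<bar>t\<bar>"] unfolding phi_denom_def
    by (auto intro!: derivative_eq_intros poly_DERIV simp: field_simps power2_eq_square)
  then show ?thesis
    by (intro DERIV_imp_deriv) (simp add: cP_eq[abs_def])
qed

lemma deriv_cP_ge:
  assumes x: "x \<in> {0<..<1}" and t: "\<bar>t\<bar> \<le> 1"
  shows "1 - \<bar>poly (pderiv P) x\<bar> \<le> deriv (cP P t) x"
proof -
  define D where "D = phi_denom P \<bar>t\<bar> x"
  have "0 < D" "\<bar>t\<bar> \<le> D"
    using phi_denom_pos[OF x] phi_denom_ge[OF x t] by (simp_all add: D_def)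
  then have "\<bar>t\<bar> * \<bar>t\<bar> \<le> D ^ 2"
    using mult_mono[of "\<bar>t\<bar>" D "\<bar>t\<bar>" D] by (simp add: power2_eq_square)
  then have "\<bar>t\<bar> * \<bar>t\<bar> * \<bar>poly (pderiv P) x\<bar> \<le> D ^ 2 * \<bar>poly (pderiv P) x\<bar>"
    by (rule mult_right_mono) simp
  then have "\<bar>t * \<bar>t\<bar> * poly (pderiv P) x / D ^ 2\<bar> \<le> \<bar>poly (pderiv P) x\<bar>"
    using \<open>0 < D\<close> by (simp add: abs_mult divide_le_eq mult.commute)
  then show ?thesis
    unfolding deriv_cP[OF x] D_def[symmetric] by linarith
qed

lemma abs_cP_minus_le:
  assumes x: "x \<in> {0<..<1}" and t: "\<bar>t\<bar> \<le> 1"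
  shows "\<bar>cP P t x - x\<bar> \<le> poly P x"
proof -
  define D where "D = phi_denom P \<bar>t\<bar> x"
  have "0 < D" "\<bar>t\<bar> \<le> D" "0 < poly P x"
    using phi_denom_pos[OF x] phi_denom_ge[OF x t] P_pos[OF x] by (simp_all add: D_def)
  then have "\<bar>t * poly P x / D\<bar> \<le> poly P x"
    by (simp add: abs_mult divide_le_eq mult_right_mono)
  then show ?thesis
    by (simp add: cP_eq D_def)
qed

lemma cP_in_interval: "x \<in> {0<..<1} \<Longrightarrow> \<bar>t\<bar> \<le> 1 \<Longrightarrow> cP P t x \<in> {0<..<1}"
  using abs_cP_minus_le[of x t] P_less[of x] by auto

lemma tendsto_cP_boundary:
  assumes "poly P 0 = 0" "poly P 1 = 0" "\<bar>t\<bar> \<le> 1"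
  shows "(cP P t \<longlongrightarrow> 1) (at_left 1)" "(cP P t \<longlongrightarrow> 0) (at_right 0)"
proof -
  have near_diag: "((\<lambda>x. cP P t x - x) \<longlongrightarrow> 0) F"
    if "eventually (\<lambda>x. x \<in> {0<..<1}) F" "((\<lambda>x. poly P x) \<longlongrightarrow> 0) F" for F
  proof (rule Lim_null_comparison)
    show "eventually (\<lambda>x. norm (cP P t x - x) \<le> poly P x) F"
      using that(1) by eventually_elim (simp add: abs_cP_minus_le assms(3))
  qed (fact that(2))
  have "eventually (\<lambda>x. x \<in> {0<..<1}) (at_left (1::real))"
    unfolding eventually_at_left[OF zero_less_one] by (intro exI[of _ 0]) auto
  moreover have "((\<lambda>x. poly P x) \<longlongrightarrow> 0) (at_left 1)"
    by (rule tendsto_eq_rhs[OF tendsto_poly[OF tendsto_ident_at]]) (fact assms(2))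
  ultimately have "((\<lambda>x. x + (cP P t x - x)) \<longlongrightarrow> 1 + 0) (at_left 1)"
    by (intro tendsto_add tendsto_ident_at near_diag)
  then show "(cP P t \<longlongrightarrow> 1) (at_left 1)"
    by simp
  have "eventually (\<lambda>x. x \<in> {0<..<1}) (at_right (0::real))"
    unfolding eventually_at_right[OF zero_less_one] by (intro exI[of _ 1]) auto
  moreover have "((\<lambda>x. poly P x) \<longlongrightarrow> 0) (at_right 0)"
    by (rule tendsto_eq_rhs[OF tendsto_poly[OF tendsto_ident_at]]) (fact assms(1))
  ultimately have "((\<lambda>x. x + (cP P t x - x)) \<longlongrightarrow> 0 + 0) (at_right 0)"
    by (intro tendsto_add tendsto_ident_at near_diag)
  then show "(cP P t \<longlongrightarrow> 0) (at_right 0)"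
    by simp
qed

lemma cP_in_setA:
  assumes "poly P 0 = 0" "poly P 1 = 0" "\<bar>t\<bar> \<le> 1"
  shows "cP P t \<in> setA"
  unfolding setA_def using smooth_on_cP cP_in_interval tendsto_cP_boundary assms by blast

lemma cP_in_setD:
  assumes "poly P 0 = 0" "poly P 1 = 0" "\<bar>t\<bar> \<le> 1"
    and deriv_bound: "Sup ((\<lambda>x. ereal \<bar>poly (pderiv P) x\<bar>) ` {0<..<1}) < 1"
  shows "cP P t \<in> setD"
proof -
  define S where "S = Sup ((\<lambda>x. ereal \<bar>poly (pderiv P) x\<bar>) ` {0<..<1})"
  have S_ge: "ereal \<bar>poly (pderiv P) x\<bar> \<le> S" if "x \<in> {0<..<1}" for x
    unfolding S_def using that by (rule SUP_upper)
  have "0 \<le> ereal \<bar>poly (pderiv P) (1 / 2)\<bar>"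
    by simp
  also have "\<dots> \<le> S"
    by (rule S_ge) simp
  finally have "0 \<le> S" .
  then obtain r where S_eq: "S = ereal r" and "r < 1"
    using deriv_bound unfolding S_def[symmetric] by (cases S) auto
  have deriv_ge: "ereal (1 - r) \<le> ereal (deriv (cP P t) x)" if "x \<in> {0<..<1}" for x
    using S_ge[OF that] deriv_cP_ge[OF that assms(3)] by (simp add: S_eq)
  have "0 < ereal (1 - r)"
    using \<open>r < 1\<close> by simp
  also have "\<dots> \<le> Inf ((\<lambda>x. ereal (deriv (cP P t) x)) ` {0<..<1})"
    using deriv_ge by (rule INF_greatest)
  finally have "0 < Inf ((\<lambda>x. ereal (deriv (cP P t) x)) ` {0<..<1})" .
  moreover have "Inf ((\<lambda>x. ereal (deriv (cP P t) x)) ` {0<..<1})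
      \<le> Sup ((\<lambda>x. ereal (deriv (cP P t) x)) ` {0<..<1})"
    by (rule INF_le_SUP) simp
  ultimately show ?thesis
    unfolding setD_def using cP_in_setA[OF assms(1-3)] by auto
qed

text \<open>
  Only the values of \<open>D\<close> on \<open>]0,1[\<close> are constrained, so that the constant \<open>1\<close>, which equals
  \<open>phi_slope P 0 0\<close> only where \<open>P \<noteq> 0\<close>, is covered.
\<close>

lemma F_has_derivative_cP:
  assumes "smooth_on {0<..<1} D"
    and D: "\<And>x. x \<in> {0<..<1} \<Longrightarrow> D x = phi_slope P \<bar>t\<bar> \<bar>t\<bar> x"
  shows "F_has_derivative (cP P) D t"
  unfolding F_has_derivative_def
proof
  show "smooth_on {0<..<1} D" by fact
  define H where "H h x = phi_slope P \<bar>t\<bar> \<bar>t + h\<bar> x - phi_slope P \<bar>t\<bar> \<bar>t\<bar> x" for h x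
  have "smooth_family {0<..<1} H"
    unfolding H_def
    by (intro smooth_family_diff smooth_family_phi_slope) (auto intro!: continuous_intros)
  moreover have "H 0 x = 0" for x
    by (simp add: H_def)
  moreover have "eventually (\<lambda>h. 0 \<le> t * (t + h)) (at 0)"
  proof (cases "t = 0")
    case False
    have "((\<lambda>h. t * (t + h)) \<longlongrightarrow> t * t) (at 0)"
      by (auto intro!: tendsto_eq_intros)
    moreover have "0 < t * t"
      using False by (simp add: zero_less_mult_iff) linarith
    ultimately have "eventually (\<lambda>h. 0 < t * (t + h)) (at 0)"
      by (rule order_tendstoD)
    then show ?thesis
      by eventually_elim simp
  qed simp
  then have "eventually
      (\<lambda>h. \<forall>x\<in>{0<..<1}. (cP P (t + h) x - cP P t x) / h - D x = H h x) (at 0)"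
    using eventually_neq_at_within[of 0 0 UNIV]
    by eventually_elim (simp add: H_def D cP_diff_quotient phi_denom_abs_neq_0)
  ultimately show "F_tendsto (\<lambda>h x. (cP P (t + h) x - cP P t x) / h) D (at 0)"
    by (rule F_tendsto_smooth_familyI)
qed

lemma F_tendsto_phi_slope:
  "F_tendsto (\<lambda>s x. phi_slope P \<bar>s\<bar> \<bar>s\<bar> x) (\<lambda>x. phi_slope P \<bar>t\<bar> \<bar>t\<bar> x) (at t within T)"
proof (rule F_tendsto_smooth_familyI)
  show "smooth_family {0<..<1} (\<lambda>s x. phi_slope P \<bar>s\<bar> \<bar>s\<bar> x - phi_slope P \<bar>t\<bar> \<bar>t\<bar> x)"
    by (intro smooth_family_diff smooth_family_phi_slope) (auto intro!: continuous_intros)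
qed auto

end

theorem theorem8p2:
  fixes P :: "real poly"
  assumes "poly P 0 = 0" and "poly P 1 = 0"
    and "\<forall>x\<in>{0<..<1}. 0 < poly P x \<and> poly P x < min x (1 - x)"
    and "Sup ((\<lambda>x. ereal \<bar>poly (pderiv P) x\<bar>) ` {0<..<1}) < 1"
  shows "(\<forall>t\<in>{-1<..<1}. cP P t \<in> setD) \<and> F_C1_on {-1<..<1} (cP P)
         \<and> F_has_derivative (cP P) (\<lambda>x. 1) 0"
proof -
  interpret under_tent P
    using assms(3) by unfold_locales
  let ?c' = "\<lambda>t x. phi_slope P \<bar>t\<bar> \<bar>t\<bar> x"
  have smooth_c': "smooth_on {0<..<1} (?c' t)" for t
    by (rule smooth_on_smooth_family[OF smooth_family_phi_slope[of "\<lambda>_. \<bar>t\<bar>" "\<lambda>_. \<bar>t\<bar>"]])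
      (auto intro: continuous_on_const)
  have "F_has_derivative (cP P) (?c' t) t" for t
    using smooth_c' by (rule F_has_derivative_cP) simp
  then have "F_C1_on {-1<..<1} (cP P)"
    unfolding F_C1_on_def using smooth_on_cP F_tendsto_phi_slope
    by (intro conjI exI[of _ ?c']) auto
  moreover have "F_has_derivative (cP P) (\<lambda>x. 1) 0"
    using smooth_on_smooth_family[OF smooth_family_param[OF continuous_on_const]]
    by (intro F_has_derivative_cP) (auto simp: phi_slope_0_0)
  moreover have "cP P t \<in> setD" if "t \<in> {-1<..<1}" for t
    using that by (intro cP_in_setD assms(1,2,4)) auto
  ultimately show ?thesis
    by blast
qed

end
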